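(* Let $U=\{\rho\in L^2(S^1):\int_0^1\rho^2dx=1\}$ be the unit sphere and $TU=\{(\rho,\sigma)\in L^2(S^1)\times L^2(S^1):\rho\in U,\ \int_0^1\rho\sigma\,dx=0\}$. Then the second-order vector field $(\rho,\sigma)\mapsto(\sigma,f(\rho,\sigma))$ restricts to the tangent bundle $TU$; that is, for every $(\rho,\sigma)\in TU$, $$\int_0^1\sigma^2\,dx+\int_0^1\rho\, f(\rho,\sigma)\,dx=0.$$
   Context: $S^1=\mathbb{R}/\mathbb{Z}$; functions on $S^1$ are $1$-periodic functions on $[0,1]$. Fix a constant $\mu\in\mathbb{R}$ (in the application $\mu=\int_0^1u_0\,dx$). For $\rho,\sigma\in L^2(S^1)$ define $$G(\rho,\sigma)(x)=\int_0^x 2\rho\sigma\,dy+\mu-\int_0^1\Big(\int_0^y 2\rho\sigma\,dz\Big)\rho(y)^2\,dy,$$ $$F(\rho,\sigma)(x)=\int_0^1\frac{\cosh\big(\big|\int_y^x\rho(z)^2dz\big|-\tfrac12\big)}{2\sinh(1/2)}\big(\rho(y)^2G(y)^2+2\sigma(y)^2\big)\,dy,\qquad f(\rho,\sigma)=\tfrac12\rho\,(G^2-F),$$ with $G=G(\rho,\sigma)$. *)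

theory Defs
  imports "HOL-Analysis.Analysis"
begin

text \<open>Functions on S^1 = R/Z are represented by real functions, of which only the
values on [0,1] matter. All integrals are (oriented) Lebesgue interval integrals.\<close>

definition G :: "real \<Rightarrow> (real \<Rightarrow> real) \<Rightarrow> (real \<Rightarrow> real) \<Rightarrow> real \<Rightarrow> real" where
  "G \<mu> \<rho> \<sigma> x =
     (LBINT y=0..x. 2 * \<rho> y * \<sigma> y) + \<mu>
     - (LBINT y=0..1. (LBINT z=0..y. 2 * \<rho> z * \<sigma> z) * (\<rho> y)\<^sup>2)"

definition F :: "real \<Rightarrow> (real \<Rightarrow> real) \<Rightarrow> (real \<Rightarrow> real) \<Rightarrow> real \<Rightarrow> real" where
  "F \<mu> \<rho> \<sigma> x =
     (LBINT y=0..1. cosh (\<bar>LBINT z=y..x. (\<rho> z)\<^sup>2\<bar> - 1/2) / (2 * sinh (1/2))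
        * ((\<rho> y)\<^sup>2 * (G \<mu> \<rho> \<sigma> y)\<^sup>2 + 2 * (\<sigma> y)\<^sup>2))"

definition f :: "real \<Rightarrow> (real \<Rightarrow> real) \<Rightarrow> (real \<Rightarrow> real) \<Rightarrow> real \<Rightarrow> real" where
  "f \<mu> \<rho> \<sigma> x = 1/2 * \<rho> x * ((G \<mu> \<rho> \<sigma> x)\<^sup>2 - F \<mu> \<rho> \<sigma> x)"

end

theory Submission
  imports Defs "HOL-Probability.Probability"
begin

(* Put R(x) = \<integral>\<^sub>0\<^sup>x \<rho>\<^sup>2. Since \<integral>\<^sub>0\<^sup>1 \<rho>\<^sup>2 = 1, R is the (continuous) distribution function
  of the probability density \<rho>\<^sup>2 on [0,1], so R pushes \<rho>\<^sup>2 dx forward to the uniform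
  distribution on [0,1]. F(x) is the integral of k(R x, R y) h(y) dy with
  h = \<rho>\<^sup>2 G\<^sup>2 + 2 \<sigma>\<^sup>2 and a kernel k whose integral over either variable is 1, hence by
  Fubini and the change of variables u = R x we get \<integral> \<rho>\<^sup>2 F = \<integral> h. Therefore
  \<integral> \<rho> f = 1/2 \<integral> \<rho>\<^sup>2 G\<^sup>2 - 1/2 \<integral> \<rho>\<^sup>2 F = - \<integral> \<sigma>\<^sup>2. *)

lemma interval_integral_eq_integral_indicator:
  fixes g :: "real \<Rightarrow> real"
  assumes "a \<le> b"
  shows "(LBINT x=ereal a..ereal b. g x) = (\<integral>x. indicator {a..b} x * g x \<partial>lborel)"
  using assms by (simp add: interval_integral_Icc set_lebesgue_integral_def)

lemma interval_integral_0_1_eq_integral_indicator: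
  fixes g :: "real \<Rightarrow> real"
  shows "(LBINT x=0..1. g x) = (\<integral>x. indicator {0..1} x * g x \<partial>lborel)"
  using interval_integral_eq_integral_indicator[of 0 1 g] by (simp add: zero_ereal_def one_ereal_def)

lemma (in real_distribution) cdf_sublevel_eq_atMost:
  assumes cont: "\<And>x. isCont (cdf M) x" and "t < 1" and "{x. cdf M x \<le> t} \<noteq> {}"
  obtains s where "{x. cdf M x \<le> t} = {..s}" and "cdf M s = t"
proof -
  define S where "S = {x. cdf M x \<le> t}"
  have "eventually (\<lambda>x. t < cdf M x) at_top"
    by (rule order_tendstoD(1)[OF cdf_lim_at_top_prob assms(2)])
  then obtain b where b: "\<And>x. b \<le> x \<Longrightarrow> t < cdf M x"
    unfolding eventually_at_top_linorder by blast
  have bdd: "bdd_above S"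
  proof (rule bdd_aboveI)
    fix x assume "x \<in> S"
    then show "x \<le> b"
      using b[of x] linorder_linear[of x b] by (auto simp: S_def)
  qed
  define s where "s = Sup S"
  have "continuous_on UNIV (cdf M)"
    by (intro continuous_at_imp_continuous_on ballI cont)
  then have "closed S"
    unfolding S_def by (intro closed_Collect_le continuous_on_const)
  then have "s \<in> S"
    using assms(3) bdd unfolding s_def S_def by (intro closed_contains_Sup)
  have S_eq: "S = {..s}"
  proof (intro equalityI subsetI)
    fix x assume "x \<in> S"
    then show "x \<in> {..s}"
      unfolding s_def using bdd by (auto intro: cSup_upper)
  next
    fix x assume "x \<in> {..s}"
    then show "x \<in> S"
      using \<open>s \<in> S\<close> cdf_nondecreasing[of x s] by (auto simp: S_def)
  qed
  have "t \<le> cdf M s"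
  proof (rule ccontr)
    assume "\<not> t \<le> cdf M s"
    then have "eventually (\<lambda>x. cdf M x < t) (at_right s)"
      using cdf_is_right_cont[of s] by (intro order_tendstoD) (auto simp: continuous_within)
    then have "eventually (\<lambda>x. s < x \<and> cdf M x < t) (at_right s)"
      by (rule eventually_conj[OF eventually_at_right_less])
    then obtain x where "s < x" "cdf M x < t"
      using eventually_happens'[OF trivial_limit_at_right_real] by blast
    then have "x \<in> S" and "x \<notin> {..s}"
      by (auto simp: S_def)
    then show False
      using S_eq by blast
  qed
  then show ?thesis
    using that[of s] \<open>s \<in> S\<close> S_eq by (simp add: S_def)
qed

lemma (in real_distribution) prob_cdf_le:
  assumes "\<And>x. isCont (cdf M) x" and "0 \<le> t" and "t \<le> 1"
  shows "prob {x. cdf M x \<le> t} = t"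
proof -
  consider "t = 1" | "t < 1" "{x. cdf M x \<le> t} = {}" | "t < 1" "{x. cdf M x \<le> t} \<noteq> {}"
    using assms(3) by fastforce
  then show ?thesis
  proof cases
    case 1
    then have "{x. cdf M x \<le> t} = space M"
      by (auto simp: cdf_bounded_prob)
    then show ?thesis
      using 1 prob_space by (simp del: space_eq_univ)
  next
    case 2
    have "t \<le> cdf M x" for x
      using equals0D[OF 2(2), of x] by simp
    then have "t \<le> 0"
      by (intro tendsto_lowerbound[OF cdf_lim_at_bot] always_eventually) auto
    then show ?thesis
      using 2 assms(2) by simp
  next
    case 3
    then obtain s where "{x. cdf M x \<le> t} = {..s}" and "cdf M s = t"
      using cdf_sublevel_eq_atMost[OF assms(1)] by blast
    then show ?thesis
      by (simp add: cdf_def)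
  qed
qed

lemma (in real_distribution) cdf_distributed_uniform:
  assumes "\<And>x. isCont (cdf M) x"
  shows "distributed M lborel (cdf M) (\<lambda>u. indicator {0..1} u / measure lborel {0..1::real})"
proof (rule uniform_distrI_borel_atLeastAtMost)
  have "continuous_on UNIV (cdf M)"
    by (intro continuous_at_imp_continuous_on ballI assms)
  then show "cdf M \<in> borel_measurable M"
    by (subst measurable_cong_sets[OF events_eq_borel refl]) (rule borel_measurable_continuous_onI)
qed (simp_all add: prob_cdf_le[OF assms])

lemma (in real_distribution) integral_comp_continuous_cdf:
  fixes g :: "real \<Rightarrow> real"
  assumes "\<And>x. isCont (cdf M) x" and [measurable]: "g \<in> borel_measurable borel"
  shows "(\<integral>x. g (cdf M x) \<partial>M) = (LBINT u=0..1. g u)"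
proof -
  have "(\<integral>x. g (cdf M x) \<partial>M) = (\<integral>u. indicator {0..1} u / measure lborel {0..1::real} * g u \<partial>lborel)"
    by (rule distributed_integral[OF cdf_distributed_uniform[OF assms(1)], symmetric]) auto
  then show ?thesis
    by (simp add: interval_integral_0_1_eq_integral_indicator)
qed

lemma measure_density_eq_integral:
  fixes w :: "'a \<Rightarrow> real"
  assumes [measurable]: "w \<in> borel_measurable M" and "\<And>x. 0 \<le> w x" and "integrable M w"
    and [measurable]: "A \<in> sets M"
  shows "measure (density M w) A = (\<integral>x. w x * indicator A x \<partial>M)"
proof -
  have "emeasure (density M w) A = (\<integral>\<^sup>+ x. ennreal (w x) * indicator A x \<partial>M)"
    by (rule emeasure_density) auto
  also have "\<dots> = (\<integral>\<^sup>+ x. ennreal (w x * indicator A x) \<partial>M)"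
    by (intro nn_integral_cong) (auto split: split_indicator)
  also have "\<dots> = ennreal (\<integral>x. w x * indicator A x \<partial>M)"
    using assms by (intro nn_integral_eq_integral integrable_real_mult_indicator) auto
  finally show ?thesis
    using assms by (simp add: measure_def integral_nonneg_AE)
qed

lemma real_distribution_density_lborel:
  fixes w :: "real \<Rightarrow> real"
  assumes "w \<in> borel_measurable borel" and "\<And>x. 0 \<le> w x" and "integrable lborel w"
    and "integral\<^sup>L lborel w = 1"
  shows "real_distribution (density lborel w)"
proof -
  have "emeasure (density lborel w) UNIV = ennreal (integral\<^sup>L lborel w)"
    using assms by (simp add: emeasure_density nn_integral_eq_integral)
  then have "prob_space (density lborel w)"
    using assms(4) by (intro prob_spaceI) simp
  then show ?thesis
    by (intro real_distribution.intro real_distribution_axioms.intro) auto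
qed

lemma cdf_density_lborel:
  fixes w :: "real \<Rightarrow> real"
  assumes "w \<in> borel_measurable borel" and "\<And>x. 0 \<le> w x" and "integrable lborel w"
  shows "cdf (density lborel w) x = (\<integral>y. w y * indicator {..x} y \<partial>lborel)"
  using assms unfolding cdf_def by (intro measure_density_eq_integral) auto

lemma isCont_cdf_density_lborel:
  fixes w :: "real \<Rightarrow> real"
  assumes "w \<in> borel_measurable borel" and "\<And>x. 0 \<le> w x" and "integrable lborel w"
    and "integral\<^sup>L lborel w = 1"
  shows "isCont (cdf (density lborel w)) x"
proof -
  interpret real_distribution "density lborel w"
    using assms by (rule real_distribution_density_lborel)
  have "measure (density lborel w) {x} = (\<integral>y. w y * indicator {x} y \<partial>lborel)"
    using assms by (intro measure_density_eq_integral) auto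
  also have "\<dots> = 0"
    by (intro integral_eq_zero_AE) (use AE_lborel_singleton[of x] in \<open>auto elim!: eventually_mono\<close>)
  finally show ?thesis
    by (simp add: isCont_cdf)
qed

lemma integral_density_comp_cdf:
  fixes w g :: "real \<Rightarrow> real"
  assumes [measurable]: "w \<in> borel_measurable borel" and w_nonneg: "\<And>x. 0 \<le> w x"
    and "integrable lborel w" and "integral\<^sup>L lborel w = 1"
    and [measurable]: "g \<in> borel_measurable borel"
  shows "(\<integral>x. w x * g (cdf (density lborel w) x) \<partial>lborel) = (LBINT u=0..1. g u)"
proof -
  interpret real_distribution "density lborel w"
    using assms(1-4) by (rule real_distribution_density_lborel)
  have cont: "isCont (cdf (density lborel w)) x" for x
    using assms(1-4) by (rule isCont_cdf_density_lborel)
  then have [measurable]: "cdf (density lborel w) \<in> borel_measurable borel"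
    by (intro borel_measurable_continuous_onI continuous_at_imp_continuous_on ballI)
  have "(\<integral>x. w x * g (cdf (density lborel w) x) \<partial>lborel)
      = (\<integral>x. g (cdf (density lborel w) x) \<partial>density lborel w)"
    using w_nonneg by (subst integral_density) auto
  also have "\<dots> = (LBINT u=0..1. g u)"
    using cont by (intro integral_comp_continuous_cdf) auto
  finally show ?thesis .
qed

lemma integrable_lborel_pair_bounded_kernel:
  fixes w h :: "real \<Rightarrow> real" and K :: "real \<Rightarrow> real \<Rightarrow> real"
  assumes w_int: "integrable lborel w" and h_int: "integrable lborel h"
    and [measurable]: "(\<lambda>(x, y). K x y) \<in> borel_measurable (lborel \<Otimes>\<^sub>M lborel)"
    and K_bound: "\<And>x y. \<bar>K x y\<bar> \<le> C"
  shows "integrable (lborel \<Otimes>\<^sub>M lborel) (\<lambda>(x, y). w x * K x y * h y)"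
proof -
  have [measurable]: "w \<in> borel_measurable lborel" "h \<in> borel_measurable lborel"
    using w_int h_int by (simp_all add: borel_measurable_integrable)
  have "0 \<le> C"
    using K_bound[of 0 0] by simp
  have "integrable (lborel \<Otimes>\<^sub>M lborel) (\<lambda>(x, y). C * \<bar>w x\<bar> * \<bar>h y\<bar>)"
  proof (rule lborel_pair.Fubini_integrable)
    show "integrable lborel (\<lambda>x. \<integral>y. norm (case (x, y) of (x, y) \<Rightarrow> C * \<bar>w x\<bar> * \<bar>h y\<bar>) \<partial>lborel)"
      using w_int h_int \<open>0 \<le> C\<close> by (simp add: abs_mult)
  qed (use h_int in auto)
  then show ?thesis
  proof (rule Bochner_Integration.integrable_bound)
    have "norm (w x * K x y * h y) \<le> norm (C * \<bar>w x\<bar> * \<bar>h y\<bar>)" for x y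
      using mult_right_mono[OF K_bound[of x y], of "\<bar>w x\<bar> * \<bar>h y\<bar>"] \<open>0 \<le> C\<close>
      by (simp add: abs_mult mult_ac)
    then show "AE p in lborel \<Otimes>\<^sub>M lborel. norm (case p of (x, y) \<Rightarrow> w x * K x y * h y)
        \<le> norm (case p of (x, y) \<Rightarrow> C * \<bar>w x\<bar> * \<bar>h y\<bar>)"
      by (intro AE_I2) (auto split: prod.split)
  qed measurable
qed

lemma integral_density_kernel_average:
  fixes w h :: "real \<Rightarrow> real" and k :: "real \<Rightarrow> real \<Rightarrow> real"
  assumes [measurable]: "w \<in> borel_measurable borel" and "\<And>x. 0 \<le> w x"
    and w_int: "integrable lborel w" and "integral\<^sup>L lborel w = 1"
    and h_int: "integrable lborel h"
    and [measurable]: "(\<lambda>(u, v). k u v) \<in> borel_measurable (borel \<Otimes>\<^sub>M borel)"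
    and k_bound: "\<And>u v. u \<in> {0..1} \<Longrightarrow> v \<in> {0..1} \<Longrightarrow> \<bar>k u v\<bar> \<le> C"
    and k_average: "\<And>v. v \<in> {0..1} \<Longrightarrow> (LBINT u=0..1. k u v) = 1"
  defines "R \<equiv> cdf (density lborel w)"
  shows "integrable lborel (\<lambda>x. w x * (\<integral>y. k (R x) (R y) * h y \<partial>lborel))"
    and "(\<integral>x. w x * (\<integral>y. k (R x) (R y) * h y \<partial>lborel) \<partial>lborel) = integral\<^sup>L lborel h"
proof -
  interpret real_distribution "density lborel w"
    using assms(1-4) by (rule real_distribution_density_lborel)
  have R_range: "R x \<in> {0..1}" for x
    unfolding R_def using cdf_nonneg cdf_bounded_prob by auto
  have "isCont R x" for x
    unfolding R_def using assms(1-4) by (rule isCont_cdf_density_lborel)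
  then have [measurable]: "R \<in> borel_measurable borel"
    by (intro borel_measurable_continuous_onI continuous_at_imp_continuous_on ballI)
  have P_int: "integrable (lborel \<Otimes>\<^sub>M lborel) (\<lambda>(x, y). w x * k (R x) (R y) * h y)"
    using k_bound[OF R_range R_range] by (intro integrable_lborel_pair_bounded_kernel w_int h_int) auto
  show "integrable lborel (\<lambda>x. w x * (\<integral>y. k (R x) (R y) * h y \<partial>lborel))"
    using lborel_pair.integrable_fst'[OF P_int] by (simp add: mult.assoc)
  have "(\<integral>x. w x * (\<integral>y. k (R x) (R y) * h y \<partial>lborel) \<partial>lborel)
      = (\<integral>y. \<integral>x. w x * k (R x) (R y) * h y \<partial>lborel \<partial>lborel)"
    using lborel_pair.Fubini_integral[of "\<lambda>x y. w x * k (R x) (R y) * h y"] P_int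
    by (simp add: mult.assoc)
  also have "\<dots> = (\<integral>y. h y * (\<integral>x. w x * k (R x) (R y) \<partial>lborel) \<partial>lborel)"
    by (simp add: mult.commute)
  also have "\<dots> = integral\<^sup>L lborel h"
    using integral_density_comp_cdf[OF assms(1-4), of "\<lambda>u. k u _"] k_average R_range
    by (simp add: R_def)
  finally show "(\<integral>x. w x * (\<integral>y. k (R x) (R y) * h y \<partial>lborel) \<partial>lborel) = integral\<^sup>L lborel h" .
qed

lemma set_integrable_mult_of_squares:
  fixes f g :: "'a \<Rightarrow> real"
  assumes [measurable]: "f \<in> borel_measurable M" "g \<in> borel_measurable M" "A \<in> sets M"
    and "set_integrable M A (\<lambda>x. (f x)\<^sup>2)" and "set_integrable M A (\<lambda>x. (g x)\<^sup>2)"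
  shows "set_integrable M A (\<lambda>x. f x * g x)"
proof -
  have "\<bar>f x * g x\<bar> \<le> (f x)\<^sup>2 + (g x)\<^sup>2" for x
  proof -
    have "2 * (\<bar>f x\<bar> * \<bar>g x\<bar>) \<le> (f x)\<^sup>2 + (g x)\<^sup>2"
      using sum_squares_bound[of "\<bar>f x\<bar>" "\<bar>g x\<bar>"] by (simp add: mult.assoc)
    moreover have "0 \<le> \<bar>f x\<bar> * \<bar>g x\<bar>"
      by simp
    ultimately show ?thesis
      unfolding abs_mult by linarith
  qed
  then have "AE x in M. x \<in> A \<longrightarrow> norm (f x * g x) \<le> norm ((f x)\<^sup>2 + (g x)\<^sup>2)"
    by (intro AE_I2) simp
  moreover have "set_borel_measurable M A (\<lambda>x. f x * g x)"
    unfolding set_borel_measurable_def by measurable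
  ultimately show ?thesis
    by (rule set_integrable_bound[OF set_integral_add(1)[OF assms(4,5)], rotated])
qed

lemma interval_integral_eq_diff:
  fixes g :: "real \<Rightarrow> real"
  assumes "set_integrable lborel {a..b} g" and "x \<in> {a..b}" and "y \<in> {a..b}"
  shows "(LBINT z=ereal y..ereal x. g z) = (LBINT z=ereal a..ereal x. g z) - (LBINT z=ereal a..ereal y. g z)"
proof -
  have "(LBINT z=ereal a..ereal y. g z) + (LBINT z=ereal y..ereal x. g z) = (LBINT z=ereal a..ereal x. g z)"
  proof (rule interval_integral_sum)
    show "interval_lebesgue_integrable lborel (min (ereal a) (min (ereal y) (ereal x)))
        (max (ereal a) (max (ereal y) (ereal x))) g"
      using assms(2,3) unfolding interval_lebesgue_integrable_def
      by (auto simp: min_def max_def einterval_iff intro!: set_integrable_subset[OF assms(1)])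
  qed
  then show ?thesis by simp
qed

lemma indefinite_integral_bounded_extension:
  fixes v :: "real \<Rightarrow> real"
  assumes [measurable]: "v \<in> borel_measurable borel" and v_int: "set_integrable lborel {0..1} v"
  obtains V where "V \<in> borel_measurable borel" and "bounded (range V)"
    and "\<And>x. x \<in> {0..1} \<Longrightarrow> (LBINT y=0..ereal x. v y) = V x"
proof -
  define V where "V x = (\<integral>y. (if y \<le> x then indicator {0..1} y * v y else 0) \<partial>lborel)" for x
  have V_meas: "V \<in> borel_measurable borel"
    unfolding V_def by measurable
  have v_int': "integrable lborel (\<lambda>y. indicator {0..1} y * v y)"
    using v_int by (simp add: set_integrable_def)
  have "\<bar>V x\<bar> \<le> (\<integral>y. \<bar>indicator {0..1} y * v y\<bar> \<partial>lborel)" for x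
    unfolding V_def
  proof (rule integral_abs_bound_integral)
    have "(\<lambda>y. if y \<le> x then indicator {0..1} y * v y else 0) = (\<lambda>y. indicator {0..1} y * v y * indicator {..x} y)"
      by (auto simp: indicator_def)
    then show "integrable lborel (\<lambda>y. if y \<le> x then indicator {0..1} y * v y else 0)"
      using integrable_real_mult_indicator[OF _ v_int', of "{..x}"] by simp
  qed (use v_int' in auto)
  then have V_bounded: "bounded (range V)"
    by (intro boundedI[where B="\<integral>y. \<bar>indicator {0..1} y * v y\<bar> \<partial>lborel"]) auto
  have V_eq: "(LBINT y=0..ereal x. v y) = V x" if "x \<in> {0..1}" for x
  proof -
    have "(LBINT y=0..ereal x. v y) = (\<integral>y. indicator {0..x} y * v y \<partial>lborel)"
      using interval_integral_eq_integral_indicator[of 0 x v] that by (simp add: zero_ereal_def)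
    also have "\<dots> = V x"
      unfolding V_def using that by (intro Bochner_Integration.integral_cong) (auto simp: indicator_def)
    finally show ?thesis .
  qed
  show ?thesis
    by (rule that[OF V_meas V_bounded V_eq])
qed

lemma G_bounded_extension:
  fixes \<mu> :: real and \<rho> \<sigma> :: "real \<Rightarrow> real"
  assumes "\<rho> \<in> borel_measurable lborel" and "\<sigma> \<in> borel_measurable lborel"
    and "set_integrable lborel {0..1} (\<lambda>x. (\<rho> x)\<^sup>2)" and "set_integrable lborel {0..1} (\<lambda>x. (\<sigma> x)\<^sup>2)"
  obtains Gt where "Gt \<in> borel_measurable borel" and "bounded (range Gt)"
    and "\<And>x. x \<in> {0..1} \<Longrightarrow> G \<mu> \<rho> \<sigma> x = Gt x"
proof -
  have [measurable]: "\<rho> \<in> borel_measurable borel" "\<sigma> \<in> borel_measurable borel"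
    using assms(1,2) by simp_all
  have "set_integrable lborel {0..1} (\<lambda>x. \<rho> x * \<sigma> x)"
    by (rule set_integrable_mult_of_squares[OF assms(1,2) _ assms(3,4)]) simp
  then have "set_integrable lborel {0..1} (\<lambda>x. 2 * (\<rho> x * \<sigma> x))"
    by (rule set_integrable_mult_right)
  then have int: "set_integrable lborel {0..1} (\<lambda>x. 2 * \<rho> x * \<sigma> x)"
    by (simp add: mult.assoc)
  have meas: "(\<lambda>x. 2 * \<rho> x * \<sigma> x) \<in> borel_measurable borel"
    by measurable
  obtain V where V: "V \<in> borel_measurable borel" "bounded (range V)"
    "\<And>x. x \<in> {0..1} \<Longrightarrow> (LBINT y=0..ereal x. 2 * \<rho> y * \<sigma> y) = V x"
    using indefinite_integral_bounded_extension[OF meas int] by blast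
  define c where "c = \<mu> - (LBINT y=0..1. (LBINT z=0..y. 2 * \<rho> z * \<sigma> z) * (\<rho> y)\<^sup>2)"
  show ?thesis
  proof (rule that[of "\<lambda>x. V x + c"])
    show "(\<lambda>x. V x + c) \<in> borel_measurable borel"
      using V(1) by simp
    show "bounded (range (\<lambda>x. V x + c))"
    proof -
      obtain B where "\<And>x. \<bar>V x\<bar> \<le> B"
        using V(2) by (auto simp: bounded_iff)
      then have "\<bar>V x + c\<bar> \<le> B + \<bar>c\<bar>" for x
        using abs_triangle_ineq[of "V x" c] by (meson add_right_mono order_trans)
      then show ?thesis
        by (intro boundedI[where B="B + \<bar>c\<bar>"]) auto
    qed
  qed (simp add: G_def V(3) c_def)
qed

lemma set_integrable_square_mult_G_square:
  fixes \<mu> :: real and \<rho> \<sigma> :: "real \<Rightarrow> real"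
  assumes "\<rho> \<in> borel_measurable lborel" and "\<sigma> \<in> borel_measurable lborel"
    and "set_integrable lborel {0..1} (\<lambda>x. (\<rho> x)\<^sup>2)" and "set_integrable lborel {0..1} (\<lambda>x. (\<sigma> x)\<^sup>2)"
  shows "set_integrable lborel {0..1} (\<lambda>x. (\<rho> x)\<^sup>2 * (G \<mu> \<rho> \<sigma> x)\<^sup>2)"
proof -
  have [measurable]: "\<rho> \<in> borel_measurable borel"
    using assms(1) by simp
  obtain Gt where [measurable]: "Gt \<in> borel_measurable borel" and "bounded (range Gt)"
    and G_eq: "\<And>x. x \<in> {0..1} \<Longrightarrow> G \<mu> \<rho> \<sigma> x = Gt x"
    using G_bounded_extension[where \<mu>=\<mu>, OF assms] by blast
  then obtain B where "\<And>x. \<bar>Gt x\<bar> \<le> B"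
    by (auto simp: bounded_iff)
  then have "(Gt x)\<^sup>2 \<le> B\<^sup>2" for x
    by (meson abs_le_square_iff abs_ge_self order_trans)
  then have "AE x in lborel. x \<in> {0..1} \<longrightarrow> norm ((\<rho> x)\<^sup>2 * (Gt x)\<^sup>2) \<le> norm (B\<^sup>2 * (\<rho> x)\<^sup>2)"
    by (intro AE_I2) (simp add: abs_mult mult_right_mono mult.commute)
  moreover have "set_borel_measurable lborel {0..1} (\<lambda>x. (\<rho> x)\<^sup>2 * (Gt x)\<^sup>2)"
    unfolding set_borel_measurable_def by measurable
  ultimately have "set_integrable lborel {0..1} (\<lambda>x. (\<rho> x)\<^sup>2 * (Gt x)\<^sup>2)"
    by (rule set_integrable_bound[OF set_integrable_mult_right[OF assms(3)], rotated])
  then show ?thesis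
    using set_integrable_cong[OF refl refl, of "{0..1}" "\<lambda>x. (\<rho> x)\<^sup>2 * (G \<mu> \<rho> \<sigma> x)\<^sup>2"] by (simp add: G_eq)
qed

lemma interval_integral_cosh_abs_diff:
  fixes a :: real assumes a: "0 \<le> a" "a \<le> 1"
  shows "(LBINT u=0..1. cosh (\<bar>u - a\<bar> - 1/2)) = 2 * sinh (1/2)"
proof -
  let ?f = "\<lambda>u::real. cosh (\<bar>u - a\<bar> - 1/2)"
  have f_cont: "continuous_on S ?f" for S by (intro continuous_intros)
  have left_part: "(LBINT u=ereal 0..ereal a. ?f u) = - sinh (a - a - 1/2) - (- sinh (a - 0 - 1/2))"
  proof (rule interval_integral_FTC_finite[OF f_cont])
    fix x assume "min 0 a \<le> x" "x \<le> max 0 a"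
    then have x: "x \<le> a" using a by auto
    have "((\<lambda>u. - sinh (a - u - 1/2)) has_real_derivative (- (cosh (a - x - 1/2) * (- 1)))) (at x within {min 0 a..max 0 a})"
      by (auto intro!: derivative_eq_intros)
    moreover have "- (cosh (a - x - 1/2) * (- 1)) = ?f x" using x by (simp add: abs_if)
    ultimately show "((\<lambda>u. - sinh (a - u - 1/2)) has_vector_derivative ?f x) (at x within {min 0 a..max 0 a})"
      by (simp add: has_real_derivative_iff_has_vector_derivative)
  qed
  have right_part: "(LBINT u=ereal a..ereal 1. ?f u) = sinh (1 - a - 1/2) - sinh (a - a - 1/2)"
  proof (rule interval_integral_FTC_finite[OF f_cont])
    fix x assume "min a 1 \<le> x" "x \<le> max a 1"
    then have x: "a \<le> x" using a by auto
    have "((\<lambda>u. sinh (u - a - 1/2)) has_real_derivative (cosh (x - a - 1/2) * 1)) (at x within {min a 1..max a 1})"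
      by (auto intro!: derivative_eq_intros)
    moreover have "cosh (x - a - 1/2) * 1 = ?f x" using x by (simp add: abs_if)
    ultimately show "((\<lambda>u. sinh (u - a - 1/2)) has_vector_derivative ?f x) (at x within {min a 1..max a 1})"
      by (simp add: has_real_derivative_iff_has_vector_derivative)
  qed
  have "(LBINT u=ereal 0..ereal a. ?f u) + (LBINT u=ereal a..ereal 1. ?f u) = (LBINT u=ereal 0..ereal 1. ?f u)"
  proof (rule interval_integral_sum)
    have "interval_lebesgue_integrable lborel (ereal 0) (ereal 1) ?f"
      by (intro interval_integrable_isCont continuous_intros)
    then show "interval_lebesgue_integrable lborel (min (ereal 0) (min (ereal a) (ereal 1)))
      (max (ereal 0) (max (ereal a) (ereal 1))) ?f" using a by (simp add: min_def max_def)
  qed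
  moreover have "sinh (1 - a - 1/2) = - sinh (a - 1/2)"
    using sinh_minus[of "a - 1/2"] by (simp add: algebra_simps)
  ultimately show ?thesis using left_part right_part by (simp add: sinh_minus zero_ereal_def one_ereal_def)
qed

(* The periodic Green's function of 1 - d\<^sup>2/du\<^sup>2 on R/Z. *)
definition cosh_kernel :: "real \<Rightarrow> real \<Rightarrow> real" where
  "cosh_kernel u v = cosh (\<bar>u - v\<bar> - 1/2) / (2 * sinh (1/2))"

lemma cosh_kernel_measurable [measurable]:
  "(\<lambda>(u, v). cosh_kernel u v) \<in> borel_measurable (borel \<Otimes>\<^sub>M borel)"
proof -
  have [measurable]: "cosh \<in> borel_measurable (borel :: real measure)"
    by (intro borel_measurable_continuous_onI continuous_intros)
  show ?thesis
    unfolding cosh_kernel_def by measurable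
qed

lemma abs_cosh_kernel_le:
  assumes "u \<in> {0..1}" and "v \<in> {0..1}"
  shows "\<bar>cosh_kernel u v\<bar> \<le> cosh (1/2) / (2 * sinh (1/2))"
proof -
  have "\<bar>\<bar>u - v\<bar> - 1/2\<bar> \<le> 1/2"
    using assms by (auto simp: abs_if)
  then have "cosh \<bar>\<bar>u - v\<bar> - 1/2\<bar> \<le> cosh (1/2)"
    by (subst cosh_real_nonneg_le_iff) auto
  then show ?thesis
    by (simp add: cosh_kernel_def divide_right_mono)
qed

lemma interval_integral_cosh_kernel:
  assumes "v \<in> {0..1}"
  shows "(LBINT u=0..1. cosh_kernel u v) = 1"
proof -
  have "(LBINT u=0..1. cosh_kernel u v) = (LBINT u=0..1. cosh (\<bar>u - v\<bar> - 1/2)) / (2 * sinh (1/2))"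
    unfolding interval_integral_0_1_eq_integral_indicator cosh_kernel_def
    by (simp flip: integral_divide_zero)
  then show ?thesis
    using interval_integral_cosh_abs_diff[of v] assms by simp
qed

lemma cdf_density_square_eq_interval_integral:
  fixes \<rho> :: "real \<Rightarrow> real"
  assumes "\<rho> \<in> borel_measurable lborel" and "set_integrable lborel {0..1} (\<lambda>x. (\<rho> x)\<^sup>2)"
    and "x \<in> {0..1}"
  shows "cdf (density lborel (\<lambda>y. indicator {0..1} y * (\<rho> y)\<^sup>2)) x = (LBINT z=0..ereal x. (\<rho> z)\<^sup>2)"
proof -
  have [measurable]: "\<rho> \<in> borel_measurable borel"
    using assms(1) by simp
  have "cdf (density lborel (\<lambda>y. indicator {0..1} y * (\<rho> y)\<^sup>2)) x
      = (\<integral>y. indicator {0..1} y * (\<rho> y)\<^sup>2 * indicator {..x} y \<partial>lborel)"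
    using assms(2) by (intro cdf_density_lborel) (auto simp: set_integrable_def)
  also have "\<dots> = (\<integral>y. indicator {0..x} y * (\<rho> y)\<^sup>2 \<partial>lborel)"
    using assms(3) by (intro Bochner_Integration.integral_cong) (auto simp: indicator_def)
  also have "\<dots> = (LBINT z=0..ereal x. (\<rho> z)\<^sup>2)"
    using interval_integral_eq_integral_indicator[of 0 x] assms(3) by (simp add: zero_ereal_def)
  finally show ?thesis .
qed

lemma F_eq_cosh_kernel_integral:
  fixes \<mu> :: real and \<rho> \<sigma> :: "real \<Rightarrow> real"
  assumes "\<rho> \<in> borel_measurable lborel" and "set_integrable lborel {0..1} (\<lambda>x. (\<rho> x)\<^sup>2)"
    and "x \<in> {0..1}"
  defines "R \<equiv> cdf (density lborel (\<lambda>y. indicator {0..1} y * (\<rho> y)\<^sup>2))"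
  shows "F \<mu> \<rho> \<sigma> x = (\<integral>y. cosh_kernel (R x) (R y)
      * (indicator {0..1} y * ((\<rho> y)\<^sup>2 * (G \<mu> \<rho> \<sigma> y)\<^sup>2 + 2 * (\<sigma> y)\<^sup>2)) \<partial>lborel)"
proof -
  have R_diff: "(LBINT z=ereal y..ereal x. (\<rho> z)\<^sup>2) = R x - R y" if "y \<in> {0..1}" for y
    using interval_integral_eq_diff[OF assms(2,3) that] assms(3) that
    by (simp add: R_def cdf_density_square_eq_interval_integral[OF assms(1,2)] zero_ereal_def)
  have "F \<mu> \<rho> \<sigma> x
      = (LBINT y=0..1. cosh_kernel (R x) (R y) * ((\<rho> y)\<^sup>2 * (G \<mu> \<rho> \<sigma> y)\<^sup>2 + 2 * (\<sigma> y)\<^sup>2))"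
    unfolding F_def cosh_kernel_def
    by (intro interval_integral_cong) (auto simp: R_diff einterval_iff zero_ereal_def one_ereal_def)
  then show ?thesis
    by (simp add: interval_integral_0_1_eq_integral_indicator mult_ac)
qed

lemma interval_integral_square_mult_F:
  fixes \<mu> :: real and \<rho> \<sigma> :: "real \<Rightarrow> real"
  assumes \<rho>_meas: "\<rho> \<in> borel_measurable lborel" and "\<sigma> \<in> borel_measurable lborel"
    and \<rho>_int: "set_integrable lborel {0..1} (\<lambda>x. (\<rho> x)\<^sup>2)"
    and \<sigma>_int: "set_integrable lborel {0..1} (\<lambda>x. (\<sigma> x)\<^sup>2)"
    and \<rho>_norm: "(LBINT x=0..1. (\<rho> x)\<^sup>2) = 1"
  shows "set_integrable lborel {0..1} (\<lambda>x. (\<rho> x)\<^sup>2 * F \<mu> \<rho> \<sigma> x)"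
    and "(LBINT x=0..1. (\<rho> x)\<^sup>2 * F \<mu> \<rho> \<sigma> x)
      = (LBINT x=0..1. (\<rho> x)\<^sup>2 * (G \<mu> \<rho> \<sigma> x)\<^sup>2) + 2 * (LBINT x=0..1. (\<sigma> x)\<^sup>2)"
proof -
  have [measurable]: "\<rho> \<in> borel_measurable borel"
    using \<rho>_meas by simp
  define w where "w x = indicator {0..1} x * (\<rho> x)\<^sup>2" for x
  define h where "h y = indicator {0..1} y * ((\<rho> y)\<^sup>2 * (G \<mu> \<rho> \<sigma> y)\<^sup>2 + 2 * (\<sigma> y)\<^sup>2)" for y
  define R where "R = cdf (density lborel w)"
  have w_meas: "w \<in> borel_measurable borel"
    unfolding w_def by measurable
  have w_int: "integrable lborel w"
    using \<rho>_int by (simp add: w_def[abs_def] set_integrable_def)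
  have w_total: "integral\<^sup>L lborel w = 1"
    using \<rho>_norm by (simp add: w_def[abs_def] interval_integral_0_1_eq_integral_indicator)
  have GG_int: "integrable lborel (\<lambda>x. indicator {0..1} x * ((\<rho> x)\<^sup>2 * (G \<mu> \<rho> \<sigma> x)\<^sup>2))"
    using set_integrable_square_mult_G_square[OF assms(1-4)] by (simp add: set_integrable_def)
  have \<sigma>\<sigma>_int: "integrable lborel (\<lambda>x. indicator {0..1} x * (\<sigma> x)\<^sup>2)"
    using \<sigma>_int by (simp add: set_integrable_def)
  have h_int: "integrable lborel h"
    using Bochner_Integration.integrable_add[OF GG_int integrable_mult_right[OF \<sigma>\<sigma>_int, of 2]]
    by (simp add: h_def[abs_def] algebra_simps)
  have F_eq: "indicator {0..1} x * ((\<rho> x)\<^sup>2 * F \<mu> \<rho> \<sigma> x)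
      = w x * (\<integral>y. cosh_kernel (R x) (R y) * h y \<partial>lborel)" for x
    by (cases "x \<in> {0..1}")
      (simp_all add: w_def[abs_def] h_def R_def F_eq_cosh_kernel_integral[OF \<rho>_meas \<rho>_int])
  note average = integral_density_kernel_average[OF w_meas _ w_int w_total h_int
      cosh_kernel_measurable abs_cosh_kernel_le interval_integral_cosh_kernel, folded R_def]
  show "set_integrable lborel {0..1} (\<lambda>x. (\<rho> x)\<^sup>2 * F \<mu> \<rho> \<sigma> x)"
    using average(1) by (simp add: set_integrable_def F_eq w_def)
  have "(LBINT x=0..1. (\<rho> x)\<^sup>2 * F \<mu> \<rho> \<sigma> x) = integral\<^sup>L lborel h"
    using average(2) by (simp add: interval_integral_0_1_eq_integral_indicator F_eq w_def)
  also have "\<dots> = (LBINT x=0..1. (\<rho> x)\<^sup>2 * (G \<mu> \<rho> \<sigma> x)\<^sup>2) + 2 * (LBINT x=0..1. (\<sigma> x)\<^sup>2)"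
    using GG_int \<sigma>\<sigma>_int by (simp add: h_def[abs_def] interval_integral_0_1_eq_integral_indicator algebra_simps)
  finally show "(LBINT x=0..1. (\<rho> x)\<^sup>2 * F \<mu> \<rho> \<sigma> x)
      = (LBINT x=0..1. (\<rho> x)\<^sup>2 * (G \<mu> \<rho> \<sigma> x)\<^sup>2) + 2 * (LBINT x=0..1. (\<sigma> x)\<^sup>2)" .
qed

theorem proposition4:
  fixes \<mu> :: real and \<rho> \<sigma> :: "real \<Rightarrow> real"
  assumes "\<rho> \<in> borel_measurable lborel" and "\<sigma> \<in> borel_measurable lborel"
    and "set_integrable lborel {0..1} (\<lambda>x. (\<rho> x)\<^sup>2)"
    and "set_integrable lborel {0..1} (\<lambda>x. (\<sigma> x)\<^sup>2)"
    and "(LBINT x=0..1. (\<rho> x)\<^sup>2) = 1"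
    and "(LBINT x=0..1. \<rho> x * \<sigma> x) = 0"
  shows "(LBINT x=0..1. (\<sigma> x)\<^sup>2) + (LBINT x=0..1. \<rho> x * f \<mu> \<rho> \<sigma> x) = 0"
proof -
  (* The identity holds without the tangency condition \<integral> \<rho> \<sigma> = 0. *)
  have GG_int: "set_integrable lborel {0..1} (\<lambda>x. (\<rho> x)\<^sup>2 * (G \<mu> \<rho> \<sigma> x)\<^sup>2)"
    using assms(1-4) by (rule set_integrable_square_mult_G_square)
  note F = interval_integral_square_mult_F[OF assms(1-5), of \<mu>]
  have "\<rho> x * f \<mu> \<rho> \<sigma> x = 1/2 * ((\<rho> x)\<^sup>2 * (G \<mu> \<rho> \<sigma> x)\<^sup>2) - 1/2 * ((\<rho> x)\<^sup>2 * F \<mu> \<rho> \<sigma> x)" for x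
    by (simp add: f_def power2_eq_square algebra_simps)
  then have "(LBINT x=0..1. \<rho> x * f \<mu> \<rho> \<sigma> x)
      = 1/2 * (LBINT x=0..1. (\<rho> x)\<^sup>2 * (G \<mu> \<rho> \<sigma> x)\<^sup>2) - 1/2 * (LBINT x=0..1. (\<rho> x)\<^sup>2 * F \<mu> \<rho> \<sigma> x)"
    using GG_int F(1) unfolding interval_integral_0_1_eq_integral_indicator set_integrable_def
    by (simp add: right_diff_distrib)
  then show ?thesis
    using F(2) by linarith
qed

end
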